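(* Let $\Theta,\Theta'$ be a well-formed System $\mathsf{F_\wedge}$ context and let $S_-, S_-', S_+, S_+'$ be types over $\Theta,\Theta'$ with $\Theta,\Theta' \vdash S_-' <: S_-$ and $\Theta,\Theta' \vdash S_+ <: S_+'$. Then for every $\mathsf{F_\wedge}$ type $T$ well-formed over $\Theta, X <: \top$, $$\Theta,\Theta' \vdash T[(S_-,S_+)/X] <: T[(S_-',S_+')/X].$$
   Context: System $\mathsf{F_\wedge}$: raw types $T ::= \top \mid X \mid T \to T \mid \forall X.T \mid T \wedge T$, identified up to $\alpha$-conversion. Contexts are finite sequences of assumptions $X<:T$ or $x:T$ with distinct variables, each type well-formed over the preceding part. Subtyping $\Theta \vdash S <: T$ is generated by: (Var) $\Theta, X<:T,\Theta' \vdash X <: T$; (Top) $T <: \top$; (Refl); (Trans); ($\to$) from $S'<:S$ and $T<:T'$ infer $S\to T <: S' \to T'$; ($\forall$) from $\Theta, X<:\top \vdash S <: T$ infer $\Theta \vdash \forall X.S <: \forall X.T$; (meet) $S\wedge S' <: S$, $S \wedge S' <: S'$, and from $T<:S$, $T<:S'$ infer $T <: S\wedge S'$. Mixed substitution $T[(S_-,S_+)/X]$ (assuming by $\alpha$-conversion that neither $X$ nor free variables of $S_-,S_+$ are bound in $T$) substitutes $S_-$ for negative and $S_+$ for positive occurrences of $X$: $X[(S_-,S_+)/X] = S_+$; $Y[(S_-,S_+)/X] = Y$ for $Y \not\equiv X$; $\top[(S_-,S_+)/X]=\top$; $(T\to T')[(S_-,S_+)/X] = T[(S_+,S_-)/X]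 \to T'[(S_-,S_+)/X]$; $(\forall Y.T)[(S_-,S_+)/X] = \forall Y.T[(S_-,S_+)/X]$; $(T\wedge T')[(S_-,S_+)/X] = T[(S_-,S_+)/X] \wedge T'[(S_-,S_+)/X]$. *)

theory Defs
  imports Main
begin

text \<open>System F-meet types in de Bruijn representation (so alpha-equivalent raw
types are identified). TVar i refers to the i-th binding counting from the
most recent one (index 0).\<close>

datatype ty =
    Top
  | TVar nat
  | Arr ty ty
  | All ty
  | Meet ty ty

text \<open>A context is a list whose head is the most recent (rightmost) assumption;
so the paper's context Theta, Theta' is the list Theta' @ Theta.
The type stored in entry number i is relative to the context drop (Suc i).\<close>

datatype binding = VarB ty | TVarB ty

type_synonym env = "binding list"

primrec lift :: "nat \<Rightarrow> nat \<Rightarrow> ty \<Rightarrow> ty" where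
  "lift k c Top = Top"
| "lift k c (TVar i) = (if i < c then TVar i else TVar (i + k))"
| "lift k c (Arr S T) = Arr (lift k c S) (lift k c T)"
| "lift k c (All T) = All (lift k (Suc c) T)"
| "lift k c (Meet S T) = Meet (lift k c S) (lift k c T)"

primrec wf_ty :: "env \<Rightarrow> ty \<Rightarrow> bool" where
  "wf_ty G Top = True"
| "wf_ty G (TVar i) = (i < length G \<and> (\<exists>U. G ! i = TVarB U))"
| "wf_ty G (Arr S T) = (wf_ty G S \<and> wf_ty G T)"
| "wf_ty G (All T) = wf_ty (TVarB Top # G) T"
| "wf_ty G (Meet S T) = (wf_ty G S \<and> wf_ty G T)"

inductive wf_env :: "env \<Rightarrow> bool" where
  wf_Nil: "wf_env []"
| wf_VarB: "wf_env G \<Longrightarrow> wf_ty G T \<Longrightarrow> wf_env (VarB T # G)"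
| wf_TVarB: "wf_env G \<Longrightarrow> wf_ty G T \<Longrightarrow> wf_env (TVarB T # G)"

inductive sub :: "env \<Rightarrow> ty \<Rightarrow> ty \<Rightarrow> bool" where
  S_Var: "i < length G \<Longrightarrow> G ! i = TVarB T \<Longrightarrow> sub G (TVar i) (lift (Suc i) 0 T)"
| S_Top: "sub G T Top"
| S_Refl: "sub G T T"
| S_Trans: "sub G S U \<Longrightarrow> sub G U T \<Longrightarrow> sub G S T"
| S_Arr: "sub G S' S \<Longrightarrow> sub G T T' \<Longrightarrow> sub G (Arr S T) (Arr S' T')"
| S_All: "sub (TVarB Top # G) S T \<Longrightarrow> sub G (All S) (All T)"
| S_Meet1: "sub G (Meet S S') S"
| S_Meet2: "sub G (Meet S S') S'"
| S_MeetI: "sub G T S \<Longrightarrow> sub G T S' \<Longrightarrow> sub G T (Meet S S')"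

text \<open>Mixed substitution for the variable with index d (the variable X seen under
d binders): negative occurrences get Sm, positive ones Sp (both lifted over the
d binders); variables above X are decremented since X's binding disappears.\<close>

primrec msubst :: "nat \<Rightarrow> ty \<Rightarrow> ty \<Rightarrow> ty \<Rightarrow> ty" where
  "msubst d Sm Sp Top = Top"
| "msubst d Sm Sp (TVar i) =
     (if i < d then TVar i else if i = d then lift d 0 Sp else TVar (i - 1))"
| "msubst d Sm Sp (Arr A B) = Arr (msubst d Sp Sm A) (msubst d Sm Sp B)"
| "msubst d Sm Sp (All A) = All (msubst (Suc d) Sm Sp A)"
| "msubst d Sm Sp (Meet A B) = Meet (msubst d Sm Sp A) (msubst d Sm Sp B)"

text \<open>T[(Sm,Sp)/X] where T is over Theta, X<:Top and the result is over
Theta, Theta' (n = length Theta'): first weaken T by inserting Theta' between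
X and Theta (lift n 1), then mixed-substitute X (index 0).\<close>

definition mixed_subst :: "nat \<Rightarrow> ty \<Rightarrow> ty \<Rightarrow> ty \<Rightarrow> ty" where
  "mixed_subst n Sm Sp T = msubst 0 Sm Sp (lift n 1 T)"

end

theory Submission
  imports Defs
begin

text \<open>Induction on the type: at the substituted variable the claim is the hypothesis
on the positive argument, weakened over the binders passed so far; the arrow rule
exchanges the roles of the two arguments on its left, exactly as the mixed substitution
does; quantifiers and meets are congruences for subtyping. In the de Bruijn encoding
the argument needs none of the well-formedness hypotheses.\<close>

lemma lift_lift_commute:
  "j \<le> c \<Longrightarrow> lift m j (lift n c T) = lift n (c + m) (lift m j T)"
  by (induction T arbitrary: j c) auto

lemma lift_lift_add:
  "j \<le> c \<Longrightarrow> c \<le> j + m \<Longrightarrow> lift n c (lift m j T) = lift (m + n) j T"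
  by (induction T arbitrary: j c) auto

fun map_binding :: "(ty \<Rightarrow> ty) \<Rightarrow> binding \<Rightarrow> binding" where
  "map_binding f (VarB T) = VarB (f T)"
| "map_binding f (TVarB T) = TVarB (f T)"

text \<open>The first k entries of G, adjusted for n new entries inserted below them;
entry i lives under the k - Suc i entries above the insertion point.\<close>

definition lift_env :: "nat \<Rightarrow> nat \<Rightarrow> env \<Rightarrow> env" where
  "lift_env n k G = map (\<lambda>i. map_binding (lift n (k - Suc i)) (G ! i)) [0..<k]"

lemma length_lift_env [simp]: "length (lift_env n k G) = k"
  by (simp add: lift_env_def)

lemma nth_lift_env_TVarB:
  "i < k \<Longrightarrow> G ! i = TVarB T \<Longrightarrow> lift_env n k G ! i = TVarB (lift n (k - Suc i) T)"
  by (simp add: lift_env_def)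

lemma lift_env_Suc_TVarB_Top:
  "lift_env n (Suc k) (TVarB Top # G) = TVarB Top # lift_env n k G"
  unfolding lift_env_def by (simp add: map_upt_Suc del: upt_Suc)

lemma sub_insert_env:
  assumes "sub G S T" and "k \<le> length G" and "length H = n"
  shows "sub (lift_env n k G @ H @ drop k G) (lift n k S) (lift n k T)"
  using assms
proof (induction arbitrary: k rule: sub.induct)
  case (S_Var i G T)
  let ?G = "lift_env n k G @ H @ drop k G"
  show ?case
  proof (cases "i < k")
    case True
    then have "?G ! i = TVarB (lift n (k - Suc i) T)"
      using S_Var by (simp add: nth_append nth_lift_env_TVarB)
    then have "sub ?G (TVar i) (lift (Suc i) 0 (lift n (k - Suc i) T))"
      using True S_Var by (intro sub.S_Var) auto
    with True show ?thesis by (simp add: lift_lift_commute)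
  next
    case False
    then have "?G ! (i + n) = TVarB T"
      using S_Var by (auto simp: nth_append)
    then have "sub ?G (TVar (i + n)) (lift (Suc (i + n)) 0 T)"
      using False S_Var by (intro sub.S_Var) auto
    with False show ?thesis by (simp add: lift_lift_add)
  qed
next
  case (S_Trans G S U T)
  then show ?case by (meson sub.S_Trans)
next
  case (S_All G S T)
  from S_All.IH[of "Suc k"] S_All.prems
  have "sub (lift_env n (Suc k) (TVarB Top # G) @ H @ drop (Suc k) (TVarB Top # G))
          (lift n (Suc k) S) (lift n (Suc k) T)"
    by simp
  then show ?case by (simp add: lift_env_Suc_TVarB_Top sub.S_All)
qed (simp_all add: sub.intros)

lemma sub_weaken: "sub G S T \<Longrightarrow> sub (H @ G) (lift (length H) 0 S) (lift (length H) 0 T)"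
  using sub_insert_env[of G S T 0 H] by (simp add: lift_env_def)

lemma sub_Meet_mono: "sub G S T \<Longrightarrow> sub G S' T' \<Longrightarrow> sub G (Meet S S') (Meet T T')"
  by (meson sub.S_Meet1 sub.S_Meet2 sub.S_MeetI sub.S_Trans)

lemma sub_msubst_mono:
  assumes "sub G Sm' Sm" and "sub G Sp Sp'" and "length B = d"
  shows "sub (B @ G) (msubst d Sm Sp U) (msubst d Sm' Sp' U)"
  using assms
proof (induction U arbitrary: d B Sm Sp Sm' Sp')
  case (TVar i)
  then show ?case by (auto simp: sub.S_Refl sub_weaken)
next
  case (All A)
  then have "sub ((TVarB Top # B) @ G) (msubst (Suc d) Sm Sp A) (msubst (Suc d) Sm' Sp' A)"
    by (intro All.IH) auto
  then show ?case by (simp add: sub.S_All)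
qed (simp_all add: sub.S_Refl sub.S_Arr sub_Meet_mono)

theorem lemma3p4:
  fixes Theta Theta' :: env and Sm Sm' Sp Sp' T :: ty
  assumes "wf_env (Theta' @ Theta)"
    and "wf_ty (Theta' @ Theta) Sm" and "wf_ty (Theta' @ Theta) Sm'"
    and "wf_ty (Theta' @ Theta) Sp" and "wf_ty (Theta' @ Theta) Sp'"
    and "sub (Theta' @ Theta) Sm' Sm"
    and "sub (Theta' @ Theta) Sp Sp'"
    and "wf_ty (TVarB Top # Theta) T"
  shows "sub (Theta' @ Theta) (mixed_subst (length Theta') Sm Sp T)
                              (mixed_subst (length Theta') Sm' Sp' T)"
  unfolding mixed_subst_def
  using sub_msubst_mono[OF assms(6,7), of "[]" 0] by simp

end
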